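(* Let $\varphi:[0,1]\to\mathbb{R}$ be a strictly increasing function of class $C^2[0,1]$ (so $\varphi'$ and $\varphi''$ are bounded on $[0,1]$), and set $s^-=\varphi(0)$, $s^+=\varphi(1)$. For a positive integer $N$ let $h=1/N$, $x_n=nh$, and let $\mathcal{M}^N_\varphi=\{s_n=\varphi(x_n): n=0,1,\dots,N\}$ be the induced non-uniform mesh on $[s^-,s^+]$, with steps $h_n=s_{n+1}-s_n>0$. For $1\le n\le N-1$ put $D_n=h_{n-1}^2+3h_{n-1}h_n+h_n^2$ and $$a_n=\frac{12h_n}{(h_{n-1}+h_n)D_n},\quad b_n=-\frac{12}{D_n},\quad c_n=\frac{12h_{n-1}}{(h_{n-1}+h_n)D_n},$$ $$d_n=\frac{h_n\,(h_{n-1}^2+h_nh_{n-1}-h_n^2)}{(h_{n-1}+h_n)D_n},\quad e_n=\frac{h_{n-1}\,(h_n^2+h_nh_{n-1}-h_{n-1}^2)}{(h_{n-1}+h_n)D_n}.$$ For a function $f\in C^6[s^-,s^+]$, writing $f_k=f(s_k)$ and $f''_k=f''(s_k)$, define the truncation error $E_n$ of the three-point compact approximation of the second derivative by $$d_nf''_{n-1}+f''_n+e_nf''_{n+1}=a_nf_{n-1}+b_nf_n+c_nf_{n+1}+E_n .$$ Then the approximation is fourth-order accurate on $\mathcal{M}^N_\varphi$: there is a constant $C$, depending only on $\varphi$ and $f$ (and not on $N$ or $n$), such that $|E_n|\le C h^4$ for all $N\ge 2$ and all $1\le n\le N-1$.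
   Context: The coefficients $a_n,b_n,c_n,d_n,e_n$ are those obtained by requiring that, after Taylor expansion about $s_n$, the coefficients of $f_n,f'_n,f''_n,f'''_n,f^{(4)}_n$ in $a_nf_{n-1}+b_nf_n+c_nf_{n+1}-(d_nf''_{n-1}+f''_n+e_nf''_{n+1})$ all vanish. Examples of admissible $\varphi$ on $[0,S]$ include the quadratic mesh $\varphi(x)=Sx^2$ and the Tavella–Randall mesh $\varphi(x)=K+\lambda\sinh(cx+c_1)$ with $0<K<S$, $\lambda>0$, $c=\sinh^{-1}((S-K)/\lambda)+\sinh^{-1}(K/\lambda)$, $c_1=-\sinh^{-1}(K/\lambda)$. *)

theory Defs
  imports "HOL-Analysis.Analysis"
begin

text \<open>f is of class C^k on the interval S, witnessed by the sequence of derivatives D: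
  D 0 = f, D (j+1) is the derivative of D j (one-sided at endpoints, i.e. within S),
  and D 0, ..., D k are continuous on S.\<close>
definition Ck_derivs :: "nat \<Rightarrow> (nat \<Rightarrow> real \<Rightarrow> real) \<Rightarrow> real set \<Rightarrow> bool" where
  "Ck_derivs k D S \<longleftrightarrow>
     (\<forall>j<k. \<forall>x\<in>S. (D j has_real_derivative D (Suc j) x) (at x within S)) \<and>
     (\<forall>j\<le>k. continuous_on S (D j))"

definition mesh :: "(real \<Rightarrow> real) \<Rightarrow> nat \<Rightarrow> nat \<Rightarrow> real" where
  "mesh \<phi> N n = \<phi> (real n / real N)"

definition step :: "(real \<Rightarrow> real) \<Rightarrow> nat \<Rightarrow> nat \<Rightarrow> real" where
  "step \<phi> N n = mesh \<phi> N (Suc n) - mesh \<phi> N n"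

text \<open>Coefficients in terms of hm = h_{n-1}, hp = h_n.\<close>
definition Dc :: "real \<Rightarrow> real \<Rightarrow> real" where
  "Dc hm hp = hm\<^sup>2 + 3 * hm * hp + hp\<^sup>2"

definition ca :: "real \<Rightarrow> real \<Rightarrow> real" where
  "ca hm hp = 12 * hp / ((hm + hp) * Dc hm hp)"
definition cb :: "real \<Rightarrow> real \<Rightarrow> real" where
  "cb hm hp = - 12 / Dc hm hp"
definition cc :: "real \<Rightarrow> real \<Rightarrow> real" where
  "cc hm hp = 12 * hm / ((hm + hp) * Dc hm hp)"
definition cd :: "real \<Rightarrow> real \<Rightarrow> real" where
  "cd hm hp = hp * (hm\<^sup>2 + hp * hm - hp\<^sup>2) / ((hm + hp) * Dc hm hp)"
definition ce :: "real \<Rightarrow> real \<Rightarrow> real" where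
  "ce hm hp = hm * (hp\<^sup>2 + hp * hm - hm\<^sup>2) / ((hm + hp) * Dc hm hp)"

definition trunc_err :: "(real \<Rightarrow> real) \<Rightarrow> (nat \<Rightarrow> real \<Rightarrow> real) \<Rightarrow> nat \<Rightarrow> nat \<Rightarrow> real" where
  "trunc_err \<phi> D N n =
     (let hm = step \<phi> N (n - 1); hp = step \<phi> N n;
          s = mesh \<phi> N in
      (cd hm hp * D 2 (s (n - 1)) + D 2 (s n) + ce hm hp * D 2 (s (Suc n)))
      - (ca hm hp * D 0 (s (n - 1)) + cb hm hp * D 0 (s n) + cc hm hp * D 0 (s (Suc n))))"

end

theory Submission
  imports Defs
begin

text \<open>Expanding f about s_n to fifth order and f'' to third order, the coefficients
  a_n, ..., e_n make the terms in f, f', ..., f^(4) cancel.  What is left is f^(5)(s_n) times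
  a defect bounded by h_{n-1} h_n |h_n - h_{n-1}| / 15, plus Taylor remainders of order
  h_{n-1}^4 + h_n^4.  On a mesh that is the image of a uniform one under a C^2 map the steps
  are O(h), and consecutive steps differ by O(h^2) because their first order Taylor terms
  cancel; so every contribution is O(h^4).\<close>

text \<open>The coefficient of f^(5)(s_n) that survives in the truncation error.\<close>

definition defect5 :: "real \<Rightarrow> real \<Rightarrow> real" where
  "defect5 u v = u * v * (v - u) * (2 * u\<^sup>2 + 2 * v\<^sup>2 + 5 * u * v) / (30 * Dc u v)"

lemma Dc_pos: "0 < u \<Longrightarrow> 0 < v \<Longrightarrow> 0 < Dc u v"
  unfolding Dc_def by (simp add: add_pos_pos)

lemma compact_coeffs_moments:
  fixes u v :: real
  assumes "0 < u" "0 < v"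
  shows "ca u v + cb u v + cc u v = 0"
    and "ca u v * u = cc u v * v"
    and "ca u v * u^2 / 2 + cc u v * v^2 / 2 = cd u v + 1 + ce u v"
    and "ca u v * u^3 / 6 - cc u v * v^3 / 6 = cd u v * u - ce u v * v"
    and "ca u v * u^4 / 24 + cc u v * v^4 / 24 = cd u v * u^2 / 2 + ce u v * v^2 / 2"
    and "ce u v * v^3 / 6 - cd u v * u^3 / 6 + ca u v * u^5 / 120 - cc u v * v^5 / 120 = defect5 u v"
proof -
  define Q where "Q = (u + v) * Dc u v"
  have "Dc u v \<noteq> 0" "u + v \<noteq> 0" using Dc_pos[OF assms] assms by auto
  then have Q: "Q \<noteq> 0" "Q = (u + v) * (u\<^sup>2 + 3 * u * v + v\<^sup>2)"
    unfolding Q_def by (simp_all add: Dc_def)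
  have coeffs: "ca u v = 12 * v / Q" "cb u v = - 12 * (u + v) / Q" "cc u v = 12 * u / Q"
      "cd u v = v * (u\<^sup>2 + v * u - v\<^sup>2) / Q" "ce u v = u * (v\<^sup>2 + v * u - u\<^sup>2) / Q"
      "defect5 u v = u * v * (v - u) * (2 * u\<^sup>2 + 2 * v\<^sup>2 + 5 * u * v) * (u + v) / (30 * Q)"
    unfolding Q_def ca_def cb_def cc_def cd_def ce_def defect5_def
    using \<open>Dc u v \<noteq> 0\<close> \<open>u + v \<noteq> 0\<close> by (simp_all add: divide_simps)
  show "ca u v + cb u v + cc u v = 0"
    and "ca u v * u = cc u v * v"
    and "ca u v * u^2 / 2 + cc u v * v^2 / 2 = cd u v + 1 + ce u v"
    and "ca u v * u^3 / 6 - cc u v * v^3 / 6 = cd u v * u - ce u v * v"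
    and "ca u v * u^4 / 24 + cc u v * v^4 / 24 = cd u v * u^2 / 2 + ce u v * v^2 / 2"
    and "ce u v * v^3 / 6 - cd u v * u^3 / 6 + ca u v * u^5 / 120 - cc u v * v^5 / 120 = defect5 u v"
    unfolding coeffs using Q(1) by (simp_all add: field_simps)
      (simp_all add: Q(2) algebra_simps power2_eq_square power3_eq_cube eval_nat_numeral)
qed

lemma compact_err_Taylor_identity:
  fixes u v :: real and F :: "nat \<Rightarrow> real"
  assumes "0 < u" "0 < v"
  shows "cd u v * (F 2 - u * F 3 + u^2/2 * F 4 - u^3/6 * F 5 + R2l) + F 2
           + ce u v * (F 2 + v * F 3 + v^2/2 * F 4 + v^3/6 * F 5 + R2r)
         - (ca u v * (F 0 - u * F 1 + u^2/2 * F 2 - u^3/6 * F 3 + u^4/24 * F 4 - u^5/120 * F 5 + R0l)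
            + cb u v * F 0
            + cc u v * (F 0 + v * F 1 + v^2/2 * F 2 + v^3/6 * F 3 + v^4/24 * F 4 + v^5/120 * F 5 + R0r))
       = defect5 u v * F 5 + cd u v * R2l + ce u v * R2r - ca u v * R0l - cc u v * R0r"
  using compact_coeffs_moments[OF assms] by algebra

lemma compact_coeffs_bounds:
  fixes u v :: real
  assumes "0 < u" "0 < v"
  shows "\<bar>cd u v\<bar> \<le> 1" "\<bar>ce u v\<bar> \<le> 1" "\<bar>ca u v\<bar> * u\<^sup>2 \<le> 12" "\<bar>cc u v\<bar> * v\<^sup>2 \<le> 12"
    and "\<bar>defect5 u v\<bar> \<le> u * v * \<bar>v - u\<bar> / 15"
proof -
  define Q where "Q = (u + v) * Dc u v"
  have Dc: "0 < Dc u v" and Q: "0 < Q" using Dc_pos[OF assms] assms by (simp_all add: Q_def)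
  have quad: "\<bar>u\<^sup>2 + v * u - v\<^sup>2\<bar> \<le> Dc u v" "\<bar>v\<^sup>2 + v * u - u\<^sup>2\<bar> \<le> Dc u v"
    "u\<^sup>2 \<le> Dc u v" "v\<^sup>2 \<le> Dc u v"
    using assms unfolding Dc_def by (auto simp: abs_le_iff)
  have num: "v * \<bar>u\<^sup>2 + v * u - v\<^sup>2\<bar> / Q \<le> 1" "u * \<bar>v\<^sup>2 + v * u - u\<^sup>2\<bar> / Q \<le> 1"
    "v * u\<^sup>2 / Q \<le> 1" "u * v\<^sup>2 / Q \<le> 1"
    unfolding divide_le_eq_1_pos[OF Q] unfolding Q_def using assms quad by (auto intro!: mult_mono)
  have "\<bar>cd u v\<bar> = v * \<bar>u\<^sup>2 + v * u - v\<^sup>2\<bar> / Q" "\<bar>ce u v\<bar> = u * \<bar>v\<^sup>2 + v * u - u\<^sup>2\<bar> / Q"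
    "\<bar>ca u v\<bar> * u\<^sup>2 = 12 * (v * u\<^sup>2 / Q)" "\<bar>cc u v\<bar> * v\<^sup>2 = 12 * (u * v\<^sup>2 / Q)"
    unfolding cd_def ce_def ca_def cc_def Q_def[symmetric] using assms Q by (simp_all add: abs_mult abs_divide)
  with num show "\<bar>cd u v\<bar> \<le> 1" "\<bar>ce u v\<bar> \<le> 1" "\<bar>ca u v\<bar> * u\<^sup>2 \<le> 12" "\<bar>cc u v\<bar> * v\<^sup>2 \<le> 12"
    by simp_all
  have P: "0 \<le> 2 * u\<^sup>2 + 2 * v\<^sup>2 + 5 * u * v" "2 * u\<^sup>2 + 2 * v\<^sup>2 + 5 * u * v \<le> 2 * Dc u v"
    using assms unfolding Dc_def by auto
  have "\<bar>defect5 u v\<bar> = u * v * \<bar>v - u\<bar> * (2 * u\<^sup>2 + 2 * v\<^sup>2 + 5 * u * v) / (30 * Dc u v)"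
    unfolding defect5_def using assms P(1) Dc by (simp add: abs_mult abs_divide)
  also have "\<dots> \<le> u * v * \<bar>v - u\<bar> * (2 * Dc u v) / (30 * Dc u v)"
    using assms P Dc by (intro divide_right_mono mult_left_mono) auto
  also have "\<dots> = u * v * \<bar>v - u\<bar> / 15"
    using Dc by simp
  finally show "\<bar>defect5 u v\<bar> \<le> u * v * \<bar>v - u\<bar> / 15" .
qed

lemma Ck_derivs_bounded:
  assumes "Ck_derivs k D S" "compact S" "j \<le> k"
  obtains B where "0 \<le> B" "\<And>x. x \<in> S \<Longrightarrow> \<bar>D j x\<bar> \<le> B"
proof -
  have "bounded (D j ` S)"
    using assms by (intro compact_imp_bounded compact_continuous_image) (auto simp: Ck_derivs_def)
  then obtain B where "0 < B" "\<forall>y\<in>D j ` S. norm y \<le> B" by (auto simp: bounded_pos)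
  then show thesis by (intro that[of B]) auto
qed

text \<open>As in field_Taylor, the remainder is divided by n! rather than (n+1)!.\<close>

lemma Ck_derivs_Taylor:
  fixes D :: "nat \<Rightarrow> real \<Rightarrow> real"
  assumes "Ck_derivs k D S" "convex S" "m + n < k"
    and "\<And>x. x \<in> S \<Longrightarrow> \<bar>D (Suc (m + n)) x\<bar> \<le> M" and "x \<in> S" "y \<in> S"
  shows "\<bar>D m y - (\<Sum>i\<le>n. D (m + i) x * (y - x)^i / fact i)\<bar> \<le> M * \<bar>y - x\<bar>^Suc n / fact n"
proof -
  have "norm ((\<lambda>i. D (m + i)) 0 y - (\<Sum>i\<le>n. (\<lambda>i. D (m + i)) i x * (y - x)^i / fact i))
      \<le> M * norm (y - x)^Suc n / fact n"
    by (rule field_Taylor[where S = S]) (use assms in \<open>auto simp: Ck_derivs_def\<close>)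
  then show ?thesis by simp
qed

lemma abs_mult_le_weighted:
  fixes c r w :: real
  assumes "\<bar>c\<bar> * w\<^sup>2 \<le> K" "\<bar>r\<bar> \<le> M * w^6" "0 \<le> M"
  shows "\<bar>c * r\<bar> \<le> K * M * w^4"
proof -
  have "\<bar>c * r\<bar> \<le> \<bar>c\<bar> * (M * w^6)"
    unfolding abs_mult using assms(2) by (rule mult_left_mono) simp
  also have "\<dots> = (\<bar>c\<bar> * w\<^sup>2) * (M * w^4)"
    by (simp add: eval_nat_numeral)
  also have "\<dots> \<le> K * (M * w^4)"
    using assms(1,3) by (intro mult_right_mono) auto
  finally show ?thesis by simp
qed

definition compact_err :: "(nat \<Rightarrow> real \<Rightarrow> real) \<Rightarrow> real \<Rightarrow> real \<Rightarrow> real \<Rightarrow> real" where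
  "compact_err D s u v =
     cd u v * D 2 (s - u) + D 2 s + ce u v * D 2 (s + v)
     - (ca u v * D 0 (s - u) + cb u v * D 0 s + cc u v * D 0 (s + v))"

lemma trunc_err_eq_compact_err:
  "0 < n \<Longrightarrow> trunc_err \<phi> D N n = compact_err D (mesh \<phi> N n) (step \<phi> N (n - 1)) (step \<phi> N n)"
  unfolding trunc_err_def compact_err_def step_def by (simp add: Let_def)

lemma compact_err_bound:
  fixes D :: "nat \<Rightarrow> real \<Rightarrow> real"
  assumes D: "Ck_derivs 6 D S" "convex S"
    and S: "s - u \<in> S" "s \<in> S" "s + v \<in> S" and uv: "0 < u" "0 < v"
    and M5: "\<And>x. x \<in> S \<Longrightarrow> \<bar>D 5 x\<bar> \<le> M5" and M6: "\<And>x. x \<in> S \<Longrightarrow> \<bar>D 6 x\<bar> \<le> M6"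
  shows "\<bar>compact_err D s u v\<bar> \<le> M5 * (u * v * \<bar>v - u\<bar>) / 15 + 4 / 15 * M6 * (u^4 + v^4)"
proof -
  define F where "F i = D i s" for i
  define R0l where "R0l = D 0 (s - u) - (F 0 - u * F 1 + u^2/2 * F 2 - u^3/6 * F 3 + u^4/24 * F 4 - u^5/120 * F 5)"
  define R0r where "R0r = D 0 (s + v) - (F 0 + v * F 1 + v^2/2 * F 2 + v^3/6 * F 3 + v^4/24 * F 4 + v^5/120 * F 5)"
  define R2l where "R2l = D 2 (s - u) - (F 2 - u * F 3 + u^2/2 * F 4 - u^3/6 * F 5)"
  define R2r where "R2r = D 2 (s + v) - (F 2 + v * F 3 + v^2/2 * F 4 + v^3/6 * F 5)"
  have Taylor: "\<bar>D m y - (\<Sum>i\<le>n. F (m + i) * (y - s)^i / fact i)\<bar> \<le> M6 * \<bar>y - s\<bar>^Suc n / fact n"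
    if "m + n = 5" "y \<in> S" for m n y
    using Ck_derivs_Taylor[OF D, of m n M6 s y] that M6 S(2) by (simp add: F_def)
  have "0 \<le> M6" using M6[OF S(2)] by linarith
  have R0: "\<bar>R0l\<bar> \<le> M6 / 120 * u^6" "\<bar>R0r\<bar> \<le> M6 / 120 * v^6"
    using Taylor[of 0 5, OF _ S(1)] Taylor[of 0 5, OF _ S(3)] uv
    by (simp_all add: R0l_def R0r_def eval_nat_numeral fact_Suc algebra_simps)
  have R2: "\<bar>R2l\<bar> \<le> M6 * u^4 / 6" "\<bar>R2r\<bar> \<le> M6 * v^4 / 6"
    using Taylor[of 2 3, OF _ S(1)] Taylor[of 2 3, OF _ S(3)] uv
    by (simp_all add: R2l_def R2r_def eval_nat_numeral fact_Suc algebra_simps)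
  have "compact_err D s u v = defect5 u v * F 5 + cd u v * R2l + ce u v * R2r - ca u v * R0l - cc u v * R0r"
    using compact_err_Taylor_identity[OF uv, where F = F and R0l = R0l and R0r = R0r and R2l = R2l and R2r = R2r]
    unfolding compact_err_def R0l_def R0r_def R2l_def R2r_def F_def by simp
  then have "\<bar>compact_err D s u v\<bar> \<le> \<bar>defect5 u v * F 5\<bar> + \<bar>cd u v * R2l\<bar> + \<bar>ce u v * R2r\<bar>
      + \<bar>ca u v * R0l\<bar> + \<bar>cc u v * R0r\<bar>"
    by linarith
  also have "\<dots> \<le> u * v * \<bar>v - u\<bar> / 15 * M5 + M6 * u^4 / 6 + M6 * v^4 / 6 + M6 * u^4 / 10 + M6 * v^4 / 10"
  proof (intro add_mono)
    show "\<bar>defect5 u v * F 5\<bar> \<le> u * v * \<bar>v - u\<bar> / 15 * M5"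
      unfolding abs_mult F_def using compact_coeffs_bounds(5)[OF uv] M5[OF S(2)] uv
      by (intro mult_mono) auto
    show "\<bar>cd u v * R2l\<bar> \<le> M6 * u^4 / 6" "\<bar>ce u v * R2r\<bar> \<le> M6 * v^4 / 6"
      using compact_coeffs_bounds(1,2)[OF uv] R2 unfolding abs_mult
      by (meson abs_ge_zero mult_left_le_one_le order_trans)+
    show "\<bar>ca u v * R0l\<bar> \<le> M6 * u^4 / 10" "\<bar>cc u v * R0r\<bar> \<le> M6 * v^4 / 10"
      using abs_mult_le_weighted[OF compact_coeffs_bounds(3)[OF uv] R0(1)]
        abs_mult_le_weighted[OF compact_coeffs_bounds(4)[OF uv] R0(2)] \<open>0 \<le> M6\<close>
      by simp_all
  qed
  also have "\<dots> = M5 * (u * v * \<bar>v - u\<bar>) / 15 + 4 / 15 * M6 * (u^4 + v^4)"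
    by (simp add: algebra_simps)
  finally show ?thesis .
qed

lemma mesh_mem:
  assumes "strict_mono_on {0..1} \<phi>" "n \<le> N"
  shows "mesh \<phi> N n \<in> {\<phi> 0..\<phi> 1}"
proof -
  have "real n / real N \<in> {0..1}" using assms(2) by (cases "N = 0") auto
  then show ?thesis
    unfolding mesh_def by (auto intro!: strict_mono_on_leD[OF assms(1)])
qed

lemma step_pos:
  assumes "strict_mono_on {0..1} \<phi>" "n < N"
  shows "0 < step \<phi> N n"
proof -
  have "real n / real N < real (Suc n) / real N" "real (Suc n) / real N \<le> 1"
    using assms(2) by (auto simp: divide_strict_right_mono)
  then show ?thesis
    unfolding step_def mesh_def by (auto intro!: strict_mono_onD[OF assms(1)])
qed

lemma mesh_neighbours:
  assumes "0 < n" "n < N"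
  shows "real (n - 1) / real N = real n / real N - 1 / real N"
    and "real (Suc n) / real N = real n / real N + 1 / real N"
    and "real n / real N - 1 / real N \<in> {0..1}" "real n / real N \<in> {0..1}"
    and "real n / real N + 1 / real N \<in> {0..1}"
proof -
  show "real (n - 1) / real N = real n / real N - 1 / real N"
    and "real (Suc n) / real N = real n / real N + 1 / real N"
    using assms by (auto simp: of_nat_diff diff_divide_distrib add_divide_distrib)
  have "1 \<le> real n" "real n + 1 \<le> real N" using assms by auto
  then show "real n / real N - 1 / real N \<in> {0..1}" "real n / real N \<in> {0..1}"
    and "real n / real N + 1 / real N \<in> {0..1}"
    by (auto simp: field_simps)
qed

lemma step_le:
  assumes "Ck_derivs 2 P {0..1}" "P 0 = \<phi>" "\<And>x. x \<in> {0..1} \<Longrightarrow> \<bar>P 1 x\<bar> \<le> L" "n < N"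
  shows "\<bar>step \<phi> N n\<bar> \<le> L / real N"
proof -
  define x where "x = real n / real N"
  have "x \<in> {0..1}" "x + 1 / real N \<in> {0..1}" "real (Suc n) / real N = x + 1 / real N"
    using assms(4) unfolding x_def by (auto simp: field_simps)
  with Ck_derivs_Taylor[OF assms(1) convex_real_interval(5), of 0 0 L x "x + 1 / real N"] assms(1-3)
  show ?thesis unfolding step_def mesh_def x_def[symmetric] by simp
qed

lemma step_diff_le:
  assumes "Ck_derivs 2 P {0..1}" "P 0 = \<phi>" "\<And>x. x \<in> {0..1} \<Longrightarrow> \<bar>P 2 x\<bar> \<le> L"
    and "0 < n" "n < N"
  shows "\<bar>step \<phi> N n - step \<phi> N (n - 1)\<bar> \<le> 2 * L / (real N)\<^sup>2"
proof -
  define x where "x = real n / real N"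
  define h where "h = 1 / real N"
  note pts = mesh_neighbours[OF assms(4,5), folded x_def h_def]
  have Taylor: "\<bar>\<phi> y - (\<phi> x + P 1 x * (y - x))\<bar> \<le> L * (y - x)\<^sup>2" if "y \<in> {0..1}" for y
    using Ck_derivs_Taylor[OF assms(1) convex_real_interval(5), of 0 1 L x y] assms(2,3) pts(4) that
    by (simp add: power2_eq_square numeral_2_eq_2)
  have "step \<phi> N n - step \<phi> N (n - 1)
      = (\<phi> (x + h) - (\<phi> x + P 1 x * h)) + (\<phi> (x - h) - (\<phi> x + P 1 x * (- h)))"
    using assms(4) unfolding step_def mesh_def pts(1,2) by (simp add: x_def)
  also have "\<bar>\<dots>\<bar> \<le> L * h\<^sup>2 + L * h\<^sup>2"
    using Taylor[OF pts(5)] Taylor[OF pts(3)] by (intro abs_triangle_ineq[THEN order_trans] add_mono) simp_all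
  finally show ?thesis by (simp add: h_def power_divide)
qed

lemma trunc_err_le:
  assumes "strict_mono_on {0..1} \<phi>" "Ck_derivs 6 D {\<phi> 0..\<phi> 1}"
    and M5: "\<And>x. x \<in> {\<phi> 0..\<phi> 1} \<Longrightarrow> \<bar>D 5 x\<bar> \<le> M5"
    and M6: "\<And>x. x \<in> {\<phi> 0..\<phi> 1} \<Longrightarrow> \<bar>D 6 x\<bar> \<le> M6"
    and n: "0 < n" "n < N"
    and steps: "step \<phi> N (n - 1) \<le> a" "step \<phi> N n \<le> a" "\<bar>step \<phi> N n - step \<phi> N (n - 1)\<bar> \<le> b"
  shows "\<bar>trunc_err \<phi> D N n\<bar> \<le> (M5 * a\<^sup>2 * b + 8 * M6 * a^4) / 15"
proof -
  define u where "u = step \<phi> N (n - 1)"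
  define v where "v = step \<phi> N n"
  have uv: "0 < u" "0 < v" unfolding u_def v_def using step_pos[OF assms(1)] n by auto
  have S: "mesh \<phi> N n - u \<in> {\<phi> 0..\<phi> 1}" "mesh \<phi> N n \<in> {\<phi> 0..\<phi> 1}"
    "mesh \<phi> N n + v \<in> {\<phi> 0..\<phi> 1}"
    using mesh_mem[OF assms(1), of "n - 1" N] mesh_mem[OF assms(1), of n N]
      mesh_mem[OF assms(1), of "Suc n" N] n
    unfolding u_def v_def step_def by auto
  then have "0 \<le> M5" "0 \<le> M6" using M5 M6 by (meson abs_ge_zero order_trans)+
  have "u * v * \<bar>v - u\<bar> \<le> a * a * b"
    using uv steps unfolding u_def v_def by (intro mult_mono) auto
  moreover have "u^4 + v^4 \<le> 2 * a^4"
    using power_mono[OF steps(1), of 4] power_mono[OF steps(2), of 4] uv unfolding u_def v_def by simp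
  ultimately have "M5 * (u * v * \<bar>v - u\<bar>) / 15 + 4 / 15 * M6 * (u^4 + v^4)
      \<le> M5 * (a * a * b) / 15 + 4 / 15 * M6 * (2 * a^4)"
    using \<open>0 \<le> M5\<close> \<open>0 \<le> M6\<close> by (intro add_mono divide_right_mono mult_left_mono) simp_all
  moreover have "\<bar>trunc_err \<phi> D N n\<bar> \<le> M5 * (u * v * \<bar>v - u\<bar>) / 15 + 4 / 15 * M6 * (u^4 + v^4)"
    unfolding trunc_err_eq_compact_err[OF n(1)] u_def[symmetric] v_def[symmetric]
    using compact_err_bound[OF assms(2) convex_real_interval(5) S uv M5 M6] .
  ultimately show ?thesis by (simp add: power2_eq_square)
qed

theorem lemma1:
  fixes \<phi> :: "real \<Rightarrow> real" and P :: "nat \<Rightarrow> real \<Rightarrow> real"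
    and f :: "real \<Rightarrow> real" and D :: "nat \<Rightarrow> real \<Rightarrow> real"
  assumes phi_mono: "strict_mono_on {0..1} \<phi>"
    and phi_C2: "P 0 = \<phi>" "Ck_derivs 2 P {0..1}"
    and f_C6: "D 0 = f" "Ck_derivs 6 D {\<phi> 0..\<phi> 1}"
  shows "\<exists>C. \<forall>N::nat. N \<ge> 2 \<longrightarrow> (\<forall>n. 1 \<le> n \<and> n \<le> N - 1 \<longrightarrow>
            \<bar>trunc_err \<phi> D N n\<bar> \<le> C * (1 / real N) ^ 4)"
proof -
  obtain M5 where M5: "\<And>x. x \<in> {\<phi> 0..\<phi> 1} \<Longrightarrow> \<bar>D 5 x\<bar> \<le> M5"
    by (rule Ck_derivs_bounded[OF f_C6(2) compact_Icc, of 5]) auto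
  obtain M6 where M6: "\<And>x. x \<in> {\<phi> 0..\<phi> 1} \<Longrightarrow> \<bar>D 6 x\<bar> \<le> M6"
    by (rule Ck_derivs_bounded[OF f_C6(2) compact_Icc, of 6]) auto
  obtain L1 where L1: "\<And>x. x \<in> {0..1} \<Longrightarrow> \<bar>P 1 x\<bar> \<le> L1"
    by (rule Ck_derivs_bounded[OF phi_C2(2) compact_Icc, of 1]) auto
  obtain L2 where L2: "\<And>x. x \<in> {0..1} \<Longrightarrow> \<bar>P 2 x\<bar> \<le> L2"
    by (rule Ck_derivs_bounded[OF phi_C2(2) compact_Icc, of 2]) auto
  show ?thesis
  proof (intro exI allI impI)
    fix N n :: nat
    assume "2 \<le> N" "1 \<le> n \<and> n \<le> N - 1"
    then have n: "0 < n" "n < N" by auto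
    have "\<bar>trunc_err \<phi> D N n\<bar> \<le> (M5 * (L1 / real N)\<^sup>2 * (2 * L2 / (real N)\<^sup>2) + 8 * M6 * (L1 / real N)^4) / 15"
      using step_le[OF phi_C2(2,1) L1 less_imp_diff_less[OF n(2)]] step_le[OF phi_C2(2,1) L1 n(2)]
        step_diff_le[OF phi_C2(2,1) L2 n]
      by (intro trunc_err_le[OF phi_mono f_C6(2) M5 M6 n]) (auto dest: abs_le_D1)
    also have "\<dots> = (2 * M5 * L1^2 * L2 + 8 * M6 * L1^4) / 15 * (1 / real N) ^ 4"
      using n by (simp add: field_simps eval_nat_numeral)
    finally show "\<bar>trunc_err \<phi> D N n\<bar> \<le> (2 * M5 * L1^2 * L2 + 8 * M6 * L1^4) / 15 * (1 / real N) ^ 4" .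
  qed
qed

end
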